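(* The variety $\mathbb{ML}^{\Box\Diamond}_{\mathrm{d}}$ is generated by its finite members; that is, an identity in the signature $\{\wedge,\vee,\neg,\Box,\Diamond,0,1\}$ holds in every algebra of $\mathbb{ML}^{\Box\Diamond}_{\mathrm{d}}$ if and only if it holds in every finite algebra of $\mathbb{ML}^{\Box\Diamond}_{\mathrm{d}}$.
   Context: A meet-complemented lattice is a lattice $(L,\le)$ such that for every $a\in L$ the element $\neg a=\max\{b\in L: a\wedge b\le c\ \text{for all } c\in L\}$ exists; it is bounded with bottom $0$ and top $1$. For $a\in L$, $\Box a=\max\{b\in L: a\vee\neg b=1\}$ and $\Diamond a=\min\{b\in L: \neg a\vee b=1\}$, when these exist. $\mathbb{ML}^{\Box\Diamond}_{\mathrm{d}}$ is the class of distributive meet-complemented lattices in which $\Box a$ and $\Diamond a$ exist for every $a$, considered as algebras $(L;\wedge,\vee,\neg,\Box,\Diamond,0,1)$. *)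

theory Defs
  imports Main
begin

record 'a mlalg =
  carrier :: "'a set"
  meet :: "'a \<Rightarrow> 'a \<Rightarrow> 'a"
  join :: "'a \<Rightarrow> 'a \<Rightarrow> 'a"
  neg  :: "'a \<Rightarrow> 'a"
  box  :: "'a \<Rightarrow> 'a"
  dia  :: "'a \<Rightarrow> 'a"
  zero :: 'a
  one  :: 'a

definition le :: "('a, 'b) mlalg_scheme \<Rightarrow> 'a \<Rightarrow> 'a \<Rightarrow> bool" where
  "le A x y \<longleftrightarrow> meet A x y = x"

definition is_max :: "('a, 'b) mlalg_scheme \<Rightarrow> 'a set \<Rightarrow> 'a \<Rightarrow> bool" where
  "is_max A S x \<longleftrightarrow> x \<in> S \<and> (\<forall>y\<in>S. le A y x)"

definition is_min :: "('a, 'b) mlalg_scheme \<Rightarrow> 'a set \<Rightarrow> 'a \<Rightarrow> bool" where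
  "is_min A S x \<longleftrightarrow> x \<in> S \<and> (\<forall>y\<in>S. le A x y)"

definition distrib_bounded_lattice :: "('a, 'b) mlalg_scheme \<Rightarrow> bool" where
  "distrib_bounded_lattice A \<longleftrightarrow>
     (let L = carrier A; m = meet A; j = join A in
       (\<forall>x\<in>L. \<forall>y\<in>L. m x y \<in> L \<and> j x y \<in> L) \<and>
       zero A \<in> L \<and> one A \<in> L \<and>
       (\<forall>x\<in>L. \<forall>y\<in>L. m x y = m y x \<and> j x y = j y x) \<and>
       (\<forall>x\<in>L. \<forall>y\<in>L. \<forall>z\<in>L. m x (m y z) = m (m x y) z \<and> j x (j y z) = j (j x y) z) \<and>
       (\<forall>x\<in>L. \<forall>y\<in>L. m x (j x y) = x \<and> j x (m x y) = x) \<and>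
       (\<forall>x\<in>L. \<forall>y\<in>L. \<forall>z\<in>L. m x (j y z) = j (m x y) (m x z)) \<and>
       (\<forall>x\<in>L. le A (zero A) x \<and> le A x (one A)))"

text \<open>Members of the class MLbd: distributive meet-complemented lattices in which
  Box and Dia exist, the operations neg, box, dia being the ones determined by the order.\<close>
definition is_MLbd :: "('a, 'b) mlalg_scheme \<Rightarrow> bool" where
  "is_MLbd A \<longleftrightarrow> distrib_bounded_lattice A \<and>
     (\<forall>a\<in>carrier A.
        is_max A {b\<in>carrier A. \<forall>c\<in>carrier A. le A (meet A a b) c} (neg A a) \<and>
        is_max A {b\<in>carrier A. join A a (neg A b) = one A} (box A a) \<and>
        is_min A {b\<in>carrier A. join A (neg A a) b = one A} (dia A a))"

datatype trm = Var nat | Meet trm trm | Join trm trm | Neg trm | Box trm | Dia trm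
  | Zero | One

primrec eval :: "('a, 'b) mlalg_scheme \<Rightarrow> (nat \<Rightarrow> 'a) \<Rightarrow> trm \<Rightarrow> 'a" where
  "eval A \<rho> (Var n) = \<rho> n"
| "eval A \<rho> (Meet s t) = meet A (eval A \<rho> s) (eval A \<rho> t)"
| "eval A \<rho> (Join s t) = join A (eval A \<rho> s) (eval A \<rho> t)"
| "eval A \<rho> (Neg s) = neg A (eval A \<rho> s)"
| "eval A \<rho> (Box s) = box A (eval A \<rho> s)"
| "eval A \<rho> (Dia s) = dia A (eval A \<rho> s)"
| "eval A \<rho> Zero = zero A"
| "eval A \<rho> One = one A"

definition holds_in :: "('a, 'b) mlalg_scheme \<Rightarrow> trm \<Rightarrow> trm \<Rightarrow> bool" where
  "holds_in A s t \<longleftrightarrow> (\<forall>\<rho>. (\<forall>n. \<rho> n \<in> carrier A) \<longrightarrow> eval A \<rho> s = eval A \<rho> t)"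

end

theory Submission
  imports Defs
begin

text \<open>A failing instance of \<open>s = t\<close> in \<open>A\<close> only involves finitely many elements: the values
  \<open>x\<close> of the subterms, together with \<open>\<not>x\<close> and \<open>\<not>\<box>x\<close>. In a distributive lattice the bounded
  sublattice generated by a finite set is finite, its elements being joins of meets of generators.
  Recomputing \<open>\<not>\<close>, \<open>\<box>\<close> and \<open>\<diamond>\<close> inside this finite lattice gives a finite member of the class,
  and on the chosen elements the recomputed operations agree with those of \<open>A\<close>: a maximum or
  minimum over a set of candidates that already belongs to the sublattice stays the extremum of
  the smaller candidate set. Hence the instance fails in the finite algebra too.\<close>

locale distrib_bounded_lattice_alg =
  fixes A :: "('a, 'b) mlalg_scheme"
  assumes lattice: "distrib_bounded_lattice A"
begin

abbreviation L :: "'a set" where "L \<equiv> carrier A"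
abbreviation inf_A (infixl "\<sqinter>" 70) where "x \<sqinter> y \<equiv> meet A x y"
abbreviation sup_A (infixl "\<squnion>" 65) where "x \<squnion> y \<equiv> join A x y"
abbreviation le_A (infix "\<sqsubseteq>" 50) where "x \<sqsubseteq> y \<equiv> le A x y"
abbreviation bot_A ("\<bottom>") where "\<bottom> \<equiv> zero A"
abbreviation top_A ("\<top>") where "\<top> \<equiv> one A"

lemma meet_closed [intro, simp]: "x \<in> L \<Longrightarrow> y \<in> L \<Longrightarrow> x \<sqinter> y \<in> L"
  and join_closed [intro, simp]: "x \<in> L \<Longrightarrow> y \<in> L \<Longrightarrow> x \<squnion> y \<in> L"
  and bot_closed [intro, simp]: "\<bottom> \<in> L"
  and top_closed [intro, simp]: "\<top> \<in> L"
  and meet_comm: "x \<in> L \<Longrightarrow> y \<in> L \<Longrightarrow> x \<sqinter> y = y \<sqinter> x"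
  and join_comm: "x \<in> L \<Longrightarrow> y \<in> L \<Longrightarrow> x \<squnion> y = y \<squnion> x"
  and meet_assoc: "x \<in> L \<Longrightarrow> y \<in> L \<Longrightarrow> z \<in> L \<Longrightarrow> x \<sqinter> (y \<sqinter> z) = x \<sqinter> y \<sqinter> z"
  and join_assoc: "x \<in> L \<Longrightarrow> y \<in> L \<Longrightarrow> z \<in> L \<Longrightarrow> x \<squnion> (y \<squnion> z) = x \<squnion> y \<squnion> z"
  and meet_absorb: "x \<in> L \<Longrightarrow> y \<in> L \<Longrightarrow> x \<sqinter> (x \<squnion> y) = x"
  and join_absorb: "x \<in> L \<Longrightarrow> y \<in> L \<Longrightarrow> x \<squnion> x \<sqinter> y = x"
  and meet_join_distrib: "x \<in> L \<Longrightarrow> y \<in> L \<Longrightarrow> z \<in> L \<Longrightarrow> x \<sqinter> (y \<squnion> z) = x \<sqinter> y \<squnion> x \<sqinter> z"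
  and bot_least: "x \<in> L \<Longrightarrow> \<bottom> \<sqsubseteq> x"
  and top_greatest: "x \<in> L \<Longrightarrow> x \<sqsubseteq> \<top>"
  using lattice unfolding distrib_bounded_lattice_def Let_def by blast+

lemma meet_idem [simp]: "x \<in> L \<Longrightarrow> x \<sqinter> x = x"
  by (metis meet_absorb join_absorb meet_closed)

lemma le_antisym: "x \<in> L \<Longrightarrow> y \<in> L \<Longrightarrow> x \<sqsubseteq> y \<Longrightarrow> y \<sqsubseteq> x \<Longrightarrow> x = y"
  by (metis le_def meet_comm)

lemma le_trans: "x \<in> L \<Longrightarrow> y \<in> L \<Longrightarrow> z \<in> L \<Longrightarrow> x \<sqsubseteq> y \<Longrightarrow> y \<sqsubseteq> z \<Longrightarrow> x \<sqsubseteq> z"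
  by (metis le_def meet_assoc)

lemma le_iff_join: "x \<in> L \<Longrightarrow> y \<in> L \<Longrightarrow> x \<sqsubseteq> y \<longleftrightarrow> x \<squnion> y = y"
  by (metis meet_absorb join_absorb join_comm le_def meet_comm)

lemma meet_le1: "x \<in> L \<Longrightarrow> y \<in> L \<Longrightarrow> x \<sqinter> y \<sqsubseteq> x"
  by (metis le_def meet_assoc meet_comm meet_idem)

lemma meet_le2: "x \<in> L \<Longrightarrow> y \<in> L \<Longrightarrow> x \<sqinter> y \<sqsubseteq> y"
  by (metis meet_comm meet_le1)

lemma meet_greatest: "x \<in> L \<Longrightarrow> y \<in> L \<Longrightarrow> z \<in> L \<Longrightarrow> z \<sqsubseteq> x \<Longrightarrow> z \<sqsubseteq> y \<Longrightarrow> z \<sqsubseteq> x \<sqinter> y"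
  by (metis le_def meet_assoc)

lemma join_ge1: "x \<in> L \<Longrightarrow> y \<in> L \<Longrightarrow> x \<sqsubseteq> x \<squnion> y"
  by (simp add: meet_absorb le_def)

lemma join_ge2: "x \<in> L \<Longrightarrow> y \<in> L \<Longrightarrow> y \<sqsubseteq> x \<squnion> y"
  by (metis join_comm join_ge1)

lemma join_least: "x \<in> L \<Longrightarrow> y \<in> L \<Longrightarrow> z \<in> L \<Longrightarrow> x \<sqsubseteq> z \<Longrightarrow> y \<sqsubseteq> z \<Longrightarrow> x \<squnion> y \<sqsubseteq> z"
  by (metis join_assoc join_closed le_iff_join)

lemma top_unique: "x \<in> L \<Longrightarrow> \<top> \<sqsubseteq> x \<Longrightarrow> x = \<top>"
  by (simp add: le_antisym top_greatest)

lemma meet_bot [simp]: "x \<in> L \<Longrightarrow> \<bottom> \<sqinter> x = \<bottom>"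
  using bot_least le_def by metis

lemma meet_top [simp]: "x \<in> L \<Longrightarrow> x \<sqinter> \<top> = x"
  using top_greatest le_def by metis

lemma bot_meet [simp]: "x \<in> L \<Longrightarrow> x \<sqinter> \<bottom> = \<bottom>"
  by (metis bot_closed meet_bot meet_comm)

lemma top_meet [simp]: "x \<in> L \<Longrightarrow> \<top> \<sqinter> x = x"
  by (metis meet_comm meet_top top_closed)

lemma bot_join [simp]: "x \<in> L \<Longrightarrow> \<bottom> \<squnion> x = x"
  by (metis bot_closed bot_least le_iff_join)

lemma join_bot [simp]: "x \<in> L \<Longrightarrow> x \<squnion> \<bottom> = x"
  by (metis bot_closed bot_join join_comm)

lemma join_top [simp]: "x \<in> L \<Longrightarrow> x \<squnion> \<top> = \<top>"
  by (metis le_iff_join top_closed top_greatest)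

lemma join_meet_distrib_right: "x \<in> L \<Longrightarrow> y \<in> L \<Longrightarrow> z \<in> L \<Longrightarrow> (y \<squnion> z) \<sqinter> x = y \<sqinter> x \<squnion> z \<sqinter> x"
  by (metis meet_join_distrib join_closed meet_comm)

lemma join_meet_distrib: "x \<in> L \<Longrightarrow> y \<in> L \<Longrightarrow> z \<in> L \<Longrightarrow> x \<squnion> y \<sqinter> z = (x \<squnion> y) \<sqinter> (x \<squnion> z)"
proof -
  assume xyz: "x \<in> L" "y \<in> L" "z \<in> L"
  have "(x \<squnion> y) \<sqinter> (x \<squnion> z) = (x \<squnion> y) \<sqinter> x \<squnion> (x \<squnion> y) \<sqinter> z"
    using xyz by (simp add: meet_join_distrib)
  also have "(x \<squnion> y) \<sqinter> x = x"
    using xyz by (metis meet_absorb meet_comm join_closed)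
  also have "(x \<squnion> y) \<sqinter> z = x \<sqinter> z \<squnion> y \<sqinter> z"
    using xyz by (simp add: join_meet_distrib_right)
  also have "x \<squnion> (x \<sqinter> z \<squnion> y \<sqinter> z) = x \<squnion> y \<sqinter> z"
    using xyz by (simp add: join_assoc join_absorb)
  finally show ?thesis by simp
qed

lemma is_max_unique: "P \<subseteq> L \<Longrightarrow> is_max A P x \<Longrightarrow> is_max A P y \<Longrightarrow> x = y"
  unfolding is_max_def using le_antisym by blast

lemma is_min_unique: "P \<subseteq> L \<Longrightarrow> is_min A P x \<Longrightarrow> is_min A P y \<Longrightarrow> x = y"
  unfolding is_min_def using le_antisym by blast

definition Meets :: "'a list \<Rightarrow> 'a" where "Meets xs = foldr (meet A) xs \<top>"
definition Joins :: "'a list \<Rightarrow> 'a" where "Joins xs = foldr (join A) xs \<bottom>"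

lemma Meets_simps [simp]: "Meets [] = \<top>" "Meets (x # xs) = x \<sqinter> Meets xs"
  by (simp_all add: Meets_def)

lemma Joins_simps [simp]: "Joins [] = \<bottom>" "Joins (x # xs) = x \<squnion> Joins xs"
  by (simp_all add: Joins_def)

lemma Meets_closed [intro, simp]: "set xs \<subseteq> L \<Longrightarrow> Meets xs \<in> L"
  by (induction xs) auto

lemma Joins_closed [intro, simp]: "set xs \<subseteq> L \<Longrightarrow> Joins xs \<in> L"
  by (induction xs) auto

lemma Meets_lower: "set xs \<subseteq> L \<Longrightarrow> y \<in> set xs \<Longrightarrow> Meets xs \<sqsubseteq> y"
  by (induction xs) (auto simp: meet_le1 intro: le_trans[OF _ _ _ meet_le2])

lemma Meets_greatest: "set xs \<subseteq> L \<Longrightarrow> z \<in> L \<Longrightarrow> \<forall>y\<in>set xs. z \<sqsubseteq> y \<Longrightarrow> z \<sqsubseteq> Meets xs"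
  by (induction xs) (auto simp: top_greatest meet_greatest)

lemma Joins_upper: "set xs \<subseteq> L \<Longrightarrow> y \<in> set xs \<Longrightarrow> y \<sqsubseteq> Joins xs"
  by (induction xs) (auto simp: join_ge1 intro: le_trans[OF _ _ _ _ join_ge2])

lemma Joins_least: "set xs \<subseteq> L \<Longrightarrow> z \<in> L \<Longrightarrow> \<forall>y\<in>set xs. y \<sqsubseteq> z \<Longrightarrow> Joins xs \<sqsubseteq> z"
  by (induction xs) (auto simp: bot_least join_least)

lemma Meets_append: "set xs \<subseteq> L \<Longrightarrow> set ys \<subseteq> L \<Longrightarrow> Meets (xs @ ys) = Meets xs \<sqinter> Meets ys"
  by (induction xs) (auto simp: meet_assoc)

lemma Joins_append: "set xs \<subseteq> L \<Longrightarrow> set ys \<subseteq> L \<Longrightarrow> Joins (xs @ ys) = Joins xs \<squnion> Joins ys"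
  by (induction xs) (auto simp: join_assoc)

lemma Meets_cong_set: "set xs \<subseteq> L \<Longrightarrow> set xs = set ys \<Longrightarrow> Meets xs = Meets ys"
  by (metis le_antisym Meets_greatest Meets_closed Meets_lower)

lemma Joins_cong_set: "set xs \<subseteq> L \<Longrightarrow> set xs = set ys \<Longrightarrow> Joins xs = Joins ys"
  by (metis le_antisym Joins_least Joins_closed Joins_upper)

lemma meet_Joins: "x \<in> L \<Longrightarrow> set ys \<subseteq> L \<Longrightarrow> x \<sqinter> Joins ys = Joins (map (meet A x) ys)"
  by (induction ys) (auto simp: meet_join_distrib)

lemma Joins_meet_Joins:
  "set xs \<subseteq> L \<Longrightarrow> set ys \<subseteq> L \<Longrightarrow> Joins xs \<sqinter> Joins ys = Joins [x \<sqinter> y. x \<leftarrow> xs, y \<leftarrow> ys]"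
proof (induction xs)
  case (Cons x xs)
  then have "Joins (x # xs) \<sqinter> Joins ys = x \<sqinter> Joins ys \<squnion> Joins xs \<sqinter> Joins ys"
    by (simp add: join_meet_distrib_right)
  with Cons show ?case
    by (simp add: meet_Joins, subst Joins_append) auto
qed simp

text \<open>Any enumeration will do: by \<open>Meets_cong_set\<close> and \<open>Joins_cong_set\<close> only its set matters.\<close>

definition enum :: "'c set \<Rightarrow> 'c list" where "enum U = (SOME xs. set xs = U)"

lemma set_enum [simp]: "finite U \<Longrightarrow> set (enum U) = U"
  unfolding enum_def by (rule someI_ex) (simp add: finite_list)

definition meet_set :: "'a set \<Rightarrow> 'a" where "meet_set U = Meets (enum U)"

definition dnf :: "'a set set \<Rightarrow> 'a" where "dnf W = Joins (map meet_set (enum W))"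

lemma enum_empty [simp]: "enum {} = []"
  by (metis finite.emptyI set_empty set_enum)

lemma meet_set_closed: "finite U \<Longrightarrow> U \<subseteq> L \<Longrightarrow> meet_set U \<in> L"
  by (simp add: meet_set_def)

lemma meet_set_union:
  "finite U \<Longrightarrow> finite V \<Longrightarrow> U \<subseteq> L \<Longrightarrow> V \<subseteq> L \<Longrightarrow> meet_set U \<sqinter> meet_set V = meet_set (U \<union> V)"
  unfolding meet_set_def by (simp add: Meets_append[symmetric] Meets_cong_set)

lemma meet_set_empty: "meet_set {} = \<top>"
  by (simp add: meet_set_def)

lemma meet_set_singleton: "x \<in> L \<Longrightarrow> meet_set {x} = x"
  using Meets_cong_set[of "enum {x}" "[x]"] by (simp add: meet_set_def)

lemma dnf_closed: "finite W \<Longrightarrow> \<forall>U\<in>W. finite U \<and> U \<subseteq> L \<Longrightarrow> dnf W \<in> L"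
  unfolding dnf_def by (rule Joins_closed) (auto simp: meet_set_closed)

lemma dnf_empty: "dnf {} = \<bottom>"
  by (simp add: dnf_def)

lemma dnf_singleton: "finite U \<Longrightarrow> U \<subseteq> L \<Longrightarrow> dnf {U} = meet_set U"
  using Joins_cong_set[of "map meet_set (enum {U})" "[meet_set U]"]
  by (simp add: dnf_def meet_set_closed)

lemma dnf_union:
  "finite W \<Longrightarrow> finite W' \<Longrightarrow> \<forall>U\<in>W \<union> W'. finite U \<and> U \<subseteq> L \<Longrightarrow> dnf W \<squnion> dnf W' = dnf (W \<union> W')"
  unfolding dnf_def by (subst Joins_append[symmetric]) (auto simp: meet_set_closed intro!: Joins_cong_set)

lemma dnf_meet:
  assumes "finite W" "finite W'" "\<forall>U\<in>W \<union> W'. finite U \<and> U \<subseteq> L"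
  shows "dnf W \<sqinter> dnf W' = dnf ((\<lambda>(U, V). U \<union> V) ` (W \<times> W'))"
  unfolding dnf_def using assms
  by (subst Joins_meet_Joins) (auto simp: meet_set_closed meet_set_union image_iff intro!: Joins_cong_set)

lemma finite_has_max:
  assumes "finite P" "P \<subseteq> L" "\<bottom> \<in> P" "\<forall>x\<in>P. \<forall>y\<in>P. x \<squnion> y \<in> P"
  shows "\<exists>m. is_max A P m"
proof -
  have "set xs \<subseteq> P \<Longrightarrow> Joins xs \<in> P" for xs
    using assms by (induction xs) auto
  then have "Joins (enum P) \<in> P" using assms by simp
  moreover have "\<forall>y\<in>P. y \<sqsubseteq> Joins (enum P)" using assms Joins_upper[of "enum P"] by auto
  ultimately show ?thesis unfolding is_max_def by blast
qed

lemma finite_has_min: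
  assumes "finite P" "P \<subseteq> L" "\<top> \<in> P" "\<forall>x\<in>P. \<forall>y\<in>P. x \<sqinter> y \<in> P"
  shows "\<exists>m. is_min A P m"
proof -
  have "set xs \<subseteq> P \<Longrightarrow> Meets xs \<in> P" for xs
    using assms by (induction xs) auto
  then have "Meets (enum P) \<in> P" using assms by simp
  moreover have "\<forall>y\<in>P. Meets (enum P) \<sqsubseteq> y" using assms Meets_lower[of "enum P"] by auto
  ultimately show ?thesis unfolding is_min_def by blast
qed

end

locale finite_sublattice = distrib_bounded_lattice_alg +
  fixes S :: "'a set"
  assumes finite_S: "finite S" and S_subset: "S \<subseteq> carrier A"
begin

definition gen :: "'a set" where "gen = dnf ` Pow (Pow S)"

lemma finite_gen: "finite gen"
  unfolding gen_def using finite_S by simp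

lemma Pow_Pow_S_finite: "W \<in> Pow (Pow S) \<Longrightarrow> finite W \<and> (\<forall>U\<in>W. finite U \<and> U \<subseteq> L)"
  using finite_S S_subset by (auto intro: finite_subset)

lemma gen_subset: "gen \<subseteq> L"
  unfolding gen_def by (auto dest!: Pow_Pow_S_finite intro: dnf_closed)

lemma gen_closed [simp]: "x \<in> gen \<Longrightarrow> x \<in> L"
  using gen_subset by blast

lemma S_subset_gen: "S \<subseteq> gen"
proof
  fix x assume "x \<in> S"
  then have "dnf {{x}} = x" and "{{x}} \<in> Pow (Pow S)"
    using S_subset by (auto simp: dnf_singleton meet_set_singleton)
  then show "x \<in> gen" unfolding gen_def by (metis image_eqI)
qed

lemma bot_gen [intro, simp]: "\<bottom> \<in> gen"
  unfolding gen_def by (metis Pow_iff dnf_empty empty_subsetI image_eqI)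

lemma top_gen [intro, simp]: "\<top> \<in> gen"
proof -
  have "dnf {{}} = \<top>" by (simp add: dnf_singleton meet_set_empty)
  then show ?thesis unfolding gen_def by (metis Pow_bottom Pow_iff empty_subsetI image_eqI insert_subset)
qed

lemma join_gen [intro, simp]: "x \<in> gen \<Longrightarrow> y \<in> gen \<Longrightarrow> x \<squnion> y \<in> gen"
proof -
  assume "x \<in> gen" "y \<in> gen"
  then obtain W W' where W: "W \<in> Pow (Pow S)" "W' \<in> Pow (Pow S)" "x = dnf W" "y = dnf W'"
    unfolding gen_def by auto
  have "x \<squnion> y = dnf (W \<union> W')"
    unfolding W(3,4) using Pow_Pow_S_finite[OF W(1)] Pow_Pow_S_finite[OF W(2)] by (intro dnf_union) blast+
  moreover have "W \<union> W' \<in> Pow (Pow S)" using W by auto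
  ultimately show ?thesis unfolding gen_def by auto
qed

lemma meet_gen [intro, simp]: "x \<in> gen \<Longrightarrow> y \<in> gen \<Longrightarrow> x \<sqinter> y \<in> gen"
proof -
  assume "x \<in> gen" "y \<in> gen"
  then obtain W W' where W: "W \<in> Pow (Pow S)" "W' \<in> Pow (Pow S)" "x = dnf W" "y = dnf W'"
    unfolding gen_def by auto
  have "x \<sqinter> y = dnf ((\<lambda>(U, V). U \<union> V) ` (W \<times> W'))"
    unfolding W(3,4) using Pow_Pow_S_finite[OF W(1)] Pow_Pow_S_finite[OF W(2)] by (intro dnf_meet) blast+
  moreover have "(\<lambda>(U, V). U \<union> V) ` (W \<times> W') \<in> Pow (Pow S)" using W by auto
  ultimately show ?thesis unfolding gen_def by auto
qed

definition neg_cands :: "'a \<Rightarrow> 'a set" where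
  "neg_cands a = {b\<in>gen. \<forall>c\<in>gen. a \<sqinter> b \<sqsubseteq> c}"

definition neg_gen :: "'a \<Rightarrow> 'a" where
  "neg_gen a = (SOME x. is_max A (neg_cands a) x)"

definition box_cands :: "'a \<Rightarrow> 'a set" where
  "box_cands a = {b\<in>gen. a \<squnion> neg_gen b = \<top>}"

definition box_gen :: "'a \<Rightarrow> 'a" where
  "box_gen a = (SOME x. is_max A (box_cands a) x)"

definition dia_cands :: "'a \<Rightarrow> 'a set" where
  "dia_cands a = {b\<in>gen. neg_gen a \<squnion> b = \<top>}"

definition dia_gen :: "'a \<Rightarrow> 'a" where
  "dia_gen a = (SOME x. is_min A (dia_cands a) x)"

lemma neg_gen_is_max: "a \<in> gen \<Longrightarrow> is_max A (neg_cands a) (neg_gen a)"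
  unfolding neg_gen_def
proof (rule someI_ex, rule finite_has_max)
  assume a: "a \<in> gen"
  show "finite (neg_cands a)" "neg_cands a \<subseteq> L"
    unfolding neg_cands_def using finite_gen by auto
  show "\<bottom> \<in> neg_cands a" unfolding neg_cands_def using a by (auto simp: bot_least)
  show "\<forall>x\<in>neg_cands a. \<forall>y\<in>neg_cands a. x \<squnion> y \<in> neg_cands a"
  proof (intro ballI)
    fix x y assume "x \<in> neg_cands a" "y \<in> neg_cands a"
    then have xy: "x \<in> gen" "y \<in> gen" "\<forall>c\<in>gen. a \<sqinter> x \<sqsubseteq> c" "\<forall>c\<in>gen. a \<sqinter> y \<sqsubseteq> c"
      unfolding neg_cands_def by auto
    have "a \<sqinter> (x \<squnion> y) \<sqsubseteq> c" if "c \<in> gen" for c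
      using xy a that by (simp add: meet_join_distrib, intro join_least) simp_all
    then show "x \<squnion> y \<in> neg_cands a" unfolding neg_cands_def using xy by auto
  qed
qed

lemma neg_gen_closed [intro, simp]: "a \<in> gen \<Longrightarrow> neg_gen a \<in> gen"
  using neg_gen_is_max unfolding is_max_def neg_cands_def by simp

lemma neg_gen_bot: "neg_gen \<bottom> = \<top>"
proof (rule top_unique)
  have "\<top> \<in> neg_cands \<bottom>" unfolding neg_cands_def by (simp add: bot_least)
  then show "\<top> \<sqsubseteq> neg_gen \<bottom>" using neg_gen_is_max[OF bot_gen] unfolding is_max_def by blast
qed simp

lemma neg_gen_join:
  assumes b: "b1 \<in> gen" "b2 \<in> gen"
  shows "neg_gen b1 \<sqinter> neg_gen b2 \<sqsubseteq> neg_gen (b1 \<squnion> b2)"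
proof -
  let ?n1 = "neg_gen b1" and ?n2 = "neg_gen b2"
  have n: "?n1 \<in> gen" "?n2 \<in> gen" using b by auto
  have bn1: "\<forall>c\<in>gen. b1 \<sqinter> ?n1 \<sqsubseteq> c" and bn2: "\<forall>c\<in>gen. b2 \<sqinter> ?n2 \<sqsubseteq> c"
    using neg_gen_is_max b unfolding is_max_def neg_cands_def by auto
  have "(b1 \<squnion> b2) \<sqinter> (?n1 \<sqinter> ?n2) \<sqsubseteq> c" if c: "c \<in> gen" for c
  proof -
    have L: "b1 \<in> L" "b2 \<in> L" "?n1 \<in> L" "?n2 \<in> L" using b n by auto
    have "(b1 \<squnion> b2) \<sqinter> (?n1 \<sqinter> ?n2) = b1 \<sqinter> (?n1 \<sqinter> ?n2) \<squnion> b2 \<sqinter> (?n2 \<sqinter> ?n1)"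
      using L by (simp add: join_meet_distrib_right meet_comm[of ?n1 ?n2])
    also have "\<dots> = b1 \<sqinter> ?n1 \<sqinter> ?n2 \<squnion> b2 \<sqinter> ?n2 \<sqinter> ?n1"
      using L by (simp add: meet_assoc)
    finally have split: "(b1 \<squnion> b2) \<sqinter> (?n1 \<sqinter> ?n2) = b1 \<sqinter> ?n1 \<sqinter> ?n2 \<squnion> b2 \<sqinter> ?n2 \<sqinter> ?n1" .
    have "b1 \<sqinter> ?n1 \<sqinter> ?n2 \<sqsubseteq> c"
      using bn1 c L by (intro le_trans[OF _ _ _ meet_le1[of "b1 \<sqinter> ?n1" ?n2]]) auto
    moreover have "b2 \<sqinter> ?n2 \<sqinter> ?n1 \<sqsubseteq> c"
      using bn2 c L by (intro le_trans[OF _ _ _ meet_le1[of "b2 \<sqinter> ?n2" ?n1]]) auto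
    ultimately show ?thesis unfolding split using c L by (intro join_least) auto
  qed
  then have "?n1 \<sqinter> ?n2 \<in> neg_cands (b1 \<squnion> b2)" unfolding neg_cands_def using n by auto
  then show ?thesis using neg_gen_is_max[of "b1 \<squnion> b2"] b unfolding is_max_def by blast
qed

lemma box_gen_is_max: "a \<in> gen \<Longrightarrow> is_max A (box_cands a) (box_gen a)"
  unfolding box_gen_def
proof (rule someI_ex, rule finite_has_max)
  assume a: "a \<in> gen"
  show "finite (box_cands a)" "box_cands a \<subseteq> L"
    unfolding box_cands_def using finite_gen by auto
  show "\<bottom> \<in> box_cands a" unfolding box_cands_def using a by (auto simp: neg_gen_bot)
  show "\<forall>x\<in>box_cands a. \<forall>y\<in>box_cands a. x \<squnion> y \<in> box_cands a"
  proof (intro ballI)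
    fix x y assume "x \<in> box_cands a" "y \<in> box_cands a"
    then have xy: "x \<in> gen" "y \<in> gen" "a \<squnion> neg_gen x = \<top>" "a \<squnion> neg_gen y = \<top>"
      unfolding box_cands_def by auto
    have n: "neg_gen x \<in> L" "neg_gen y \<in> L" "neg_gen (x \<squnion> y) \<in> L" using xy by auto
    have "a \<squnion> neg_gen x \<sqinter> neg_gen y = (a \<squnion> neg_gen x) \<sqinter> (a \<squnion> neg_gen y)"
      using n a by (intro join_meet_distrib) simp_all
    then have top: "a \<squnion> neg_gen x \<sqinter> neg_gen y = \<top>" unfolding xy(3,4) by simp
    have "neg_gen x \<sqinter> neg_gen y \<sqsubseteq> a \<squnion> neg_gen (x \<squnion> y)"
      using n a by (intro le_trans[OF _ _ _ neg_gen_join[OF xy(1,2)] join_ge2]) simp_all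
    then have "a \<squnion> neg_gen x \<sqinter> neg_gen y \<sqsubseteq> a \<squnion> neg_gen (x \<squnion> y)"
      using n a by (intro join_least[OF _ _ _ join_ge1]) simp_all
    then have "a \<squnion> neg_gen (x \<squnion> y) = \<top>" using n a by (intro top_unique) (simp_all add: top)
    then show "x \<squnion> y \<in> box_cands a" unfolding box_cands_def using xy by auto
  qed
qed

lemma dia_gen_is_min: "a \<in> gen \<Longrightarrow> is_min A (dia_cands a) (dia_gen a)"
  unfolding dia_gen_def
proof (rule someI_ex, rule finite_has_min)
  assume a: "a \<in> gen"
  show "finite (dia_cands a)" "dia_cands a \<subseteq> L"
    unfolding dia_cands_def using finite_gen by auto
  show "\<top> \<in> dia_cands a" unfolding dia_cands_def using a by auto
  show "\<forall>x\<in>dia_cands a. \<forall>y\<in>dia_cands a. x \<sqinter> y \<in> dia_cands a"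
    unfolding dia_cands_def using a by (auto simp: join_meet_distrib)
qed

definition sub_alg :: "'a mlalg" where
  "sub_alg = \<lparr>carrier = gen, meet = meet A, join = join A, neg = neg_gen, box = box_gen,
     dia = dia_gen, zero = \<bottom>, one = \<top>\<rparr>"

lemma sub_alg_simps [simp]:
  "carrier sub_alg = gen" "meet sub_alg = meet A" "join sub_alg = join A" "zero sub_alg = \<bottom>"
  "one sub_alg = \<top>" "neg sub_alg = neg_gen" "box sub_alg = box_gen" "dia sub_alg = dia_gen"
  by (simp_all add: sub_alg_def)

lemma le_sub_alg [simp]: "le sub_alg = le A"
  unfolding le_def[abs_def] by simp

lemma sub_alg_is_MLbd: "is_MLbd sub_alg"
  unfolding is_MLbd_def
proof (intro conjI ballI)
  show "distrib_bounded_lattice sub_alg"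
    unfolding distrib_bounded_lattice_def Let_def sub_alg_simps le_sub_alg
  proof (intro conjI ballI)
    fix x y z assume xyz: "x \<in> gen" "y \<in> gen" "z \<in> gen"
    show "x \<sqinter> y \<in> gen" "x \<squnion> y \<in> gen" using xyz by auto
    show "x \<sqinter> y = y \<sqinter> x" "x \<squnion> y = y \<squnion> x" using xyz by (simp_all add: meet_comm join_comm)
    show "x \<sqinter> (y \<sqinter> z) = x \<sqinter> y \<sqinter> z" "x \<squnion> (y \<squnion> z) = x \<squnion> y \<squnion> z"
      using xyz by (simp_all add: meet_assoc join_assoc)
    show "x \<sqinter> (x \<squnion> y) = x" "x \<squnion> x \<sqinter> y = x" using xyz by (simp_all add: meet_absorb join_absorb)
    show "x \<sqinter> (y \<squnion> z) = x \<sqinter> y \<squnion> x \<sqinter> z" using xyz by (simp add: meet_join_distrib)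
    show "\<bottom> \<sqsubseteq> x" "x \<sqsubseteq> \<top>" using xyz by (simp_all add: bot_least top_greatest)
  qed auto
next
  fix a assume "a \<in> carrier sub_alg"
  then have a: "a \<in> gen" by simp
  show "is_max sub_alg {b\<in>carrier sub_alg. \<forall>c\<in>carrier sub_alg. le sub_alg (meet sub_alg a b) c}
          (neg sub_alg a)"
    using neg_gen_is_max[OF a] unfolding is_max_def neg_cands_def by simp
  show "is_max sub_alg {b\<in>carrier sub_alg. join sub_alg a (neg sub_alg b) = one sub_alg} (box sub_alg a)"
    using box_gen_is_max[OF a] unfolding is_max_def box_cands_def by simp
  show "is_min sub_alg {b\<in>carrier sub_alg. join sub_alg (neg sub_alg a) b = one sub_alg} (dia sub_alg a)"
    using dia_gen_is_min[OF a] unfolding is_min_def dia_cands_def by simp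
qed

end

lemma MLbd_distrib_bounded_lattice_alg: "is_MLbd A \<Longrightarrow> distrib_bounded_lattice_alg A"
  unfolding is_MLbd_def distrib_bounded_lattice_alg_def by blast

lemma MLbd_neg_is_max:
  "is_MLbd A \<Longrightarrow> a \<in> carrier A \<Longrightarrow>
    is_max A {b\<in>carrier A. \<forall>c\<in>carrier A. le A (meet A a b) c} (neg A a)"
  unfolding is_MLbd_def by blast

lemma MLbd_box_is_max:
  "is_MLbd A \<Longrightarrow> a \<in> carrier A \<Longrightarrow> is_max A {b\<in>carrier A. join A a (neg A b) = one A} (box A a)"
  unfolding is_MLbd_def by blast

lemma MLbd_dia_is_min:
  "is_MLbd A \<Longrightarrow> a \<in> carrier A \<Longrightarrow> is_min A {b\<in>carrier A. join A (neg A a) b = one A} (dia A a)"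
  unfolding is_MLbd_def by blast

lemma MLbd_neg_closed: "is_MLbd A \<Longrightarrow> a \<in> carrier A \<Longrightarrow> neg A a \<in> carrier A"
  using MLbd_neg_is_max[of A a] unfolding is_max_def by simp

lemma MLbd_box_closed: "is_MLbd A \<Longrightarrow> a \<in> carrier A \<Longrightarrow> box A a \<in> carrier A"
  using MLbd_box_is_max[of A a] unfolding is_max_def by simp

lemma MLbd_dia_closed: "is_MLbd A \<Longrightarrow> a \<in> carrier A \<Longrightarrow> dia A a \<in> carrier A"
  using MLbd_dia_is_min[of A a] unfolding is_min_def by simp

lemma eval_closed:
  assumes A: "is_MLbd A" and \<rho>: "\<forall>n. \<rho> n \<in> carrier A"
  shows "eval A \<rho> t \<in> carrier A"
proof -
  interpret distrib_bounded_lattice_alg A using MLbd_distrib_bounded_lattice_alg[OF A] .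
  show ?thesis
    by (induction t) (simp_all add: \<rho> MLbd_neg_closed[OF A] MLbd_box_closed[OF A] MLbd_dia_closed[OF A])
qed

primrec subterms :: "trm \<Rightarrow> trm set" where
  "subterms (Var n) = {Var n}"
| "subterms (Meet s t) = insert (Meet s t) (subterms s \<union> subterms t)"
| "subterms (Join s t) = insert (Join s t) (subterms s \<union> subterms t)"
| "subterms (Neg t) = insert (Neg t) (subterms t)"
| "subterms (Box t) = insert (Box t) (subterms t)"
| "subterms (Dia t) = insert (Dia t) (subterms t)"
| "subterms Zero = {Zero}"
| "subterms One = {One}"

lemma subterms_refl: "t \<in> subterms t"
  by (cases t) auto

lemma finite_subterms: "finite (subterms t)"
  by (induction t) auto

locale MLbd_finite_sublattice = finite_sublattice +
  assumes MLbd: "is_MLbd A"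
begin

text \<open>Since \<open>\<bottom> \<in> gen\<close>, disjointness from \<open>a\<close> relative to \<open>gen\<close> is disjointness in \<open>A\<close>.\<close>

lemma neg_cands_subset:
  assumes a: "a \<in> gen"
  shows "neg_cands a \<subseteq> {b\<in>L. \<forall>c\<in>L. a \<sqinter> b \<sqsubseteq> c}"
proof
  fix b assume "b \<in> neg_cands a"
  then have b: "b \<in> gen" "a \<sqinter> b \<sqsubseteq> \<bottom>" unfolding neg_cands_def by auto
  have "a \<sqinter> b \<sqsubseteq> c" if "c \<in> L" for c
    using a b that by (intro le_trans[OF _ _ _ b(2) bot_least]) simp_all
  then show "b \<in> {b\<in>L. \<forall>c\<in>L. a \<sqinter> b \<sqsubseteq> c}" using b(1) by simp
qed

lemma neg_gen_le: "b \<in> gen \<Longrightarrow> neg_gen b \<sqsubseteq> neg A b"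
proof -
  assume b: "b \<in> gen"
  then have "neg_gen b \<in> {c\<in>L. \<forall>d\<in>L. b \<sqinter> c \<sqsubseteq> d}"
    using neg_gen_is_max[OF b] neg_cands_subset[OF b] unfolding is_max_def by blast
  then show ?thesis using MLbd_neg_is_max[OF MLbd, of b] b unfolding is_max_def by simp
qed

lemma neg_gen_eq: "a \<in> gen \<Longrightarrow> neg A a \<in> gen \<Longrightarrow> neg_gen a = neg A a"
proof (rule le_antisym)
  assume a: "a \<in> gen" and na: "neg A a \<in> gen"
  have "\<forall>c\<in>gen. a \<sqinter> neg A a \<sqsubseteq> c"
    using MLbd_neg_is_max[OF MLbd, of a] a unfolding is_max_def by simp
  then have "neg A a \<in> neg_cands a" unfolding neg_cands_def using na by simp
  then show "neg A a \<sqsubseteq> neg_gen a" using neg_gen_is_max[OF a] unfolding is_max_def by blast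
  show "neg_gen a \<sqsubseteq> neg A a" using neg_gen_le[OF a] .
  show "neg_gen a \<in> L" "neg A a \<in> L" using a na by simp_all
qed

lemma box_gen_eq:
  assumes a: "a \<in> gen" and gen: "box A a \<in> gen" "neg A (box A a) \<in> gen"
  shows "box_gen a = box A a"
proof -
  have box: "is_max A {b\<in>L. a \<squnion> neg A b = \<top>} (box A a)"
    using MLbd_box_is_max[OF MLbd] a by simp
  have "y \<sqsubseteq> box A a" if y: "y \<in> box_cands a" for y
  proof -
    have yg: "y \<in> gen" "a \<squnion> neg_gen y = \<top>" using y unfolding box_cands_def by auto
    have ny: "neg A y \<in> L" using MLbd_neg_closed[OF MLbd] yg by simp
    have "a \<squnion> neg_gen y \<sqsubseteq> a \<squnion> neg A y"
      using neg_gen_le[OF yg(1)] yg a ny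
      by (intro join_least[OF _ _ _ join_ge1] le_trans[OF _ _ _ _ join_ge2]) simp_all
    then have "a \<squnion> neg A y = \<top>" using yg a ny by (intro top_unique) simp_all
    then show ?thesis using box yg unfolding is_max_def by simp
  qed
  moreover have "box A a \<in> box_cands a"
    using box gen neg_gen_eq unfolding box_cands_def is_max_def by simp
  ultimately have "is_max A (box_cands a) (box A a)" unfolding is_max_def by simp
  moreover have "box_cands a \<subseteq> L" unfolding box_cands_def by auto
  ultimately show ?thesis using box_gen_is_max[OF a] is_max_unique by metis
qed

lemma dia_gen_eq:
  assumes a: "a \<in> gen" and gen: "neg A a \<in> gen" "dia A a \<in> gen"
  shows "dia_gen a = dia A a"
proof -
  have "dia_cands a = {b\<in>gen. neg A a \<squnion> b = \<top>}"
    unfolding dia_cands_def using neg_gen_eq a gen by simp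
  then have "is_min A (dia_cands a) (dia A a)"
    using MLbd_dia_is_min[OF MLbd] a gen unfolding is_min_def by auto
  moreover have "dia_cands a \<subseteq> L" unfolding dia_cands_def by auto
  ultimately show ?thesis using dia_gen_is_min[OF a] is_min_unique by metis
qed


text \<open>Variables valued outside \<open>gen\<close> are redirected to \<open>\<bottom>\<close>; by the hypothesis they do not
  occur in \<open>t\<close>.\<close>

lemma eval_sub_alg:
  assumes "\<forall>u\<in>subterms t. eval A \<rho> u \<in> gen \<and> neg A (eval A \<rho> u) \<in> gen \<and>
             neg A (box A (eval A \<rho> u)) \<in> gen"
  shows "eval sub_alg (\<lambda>n. if \<rho> n \<in> gen then \<rho> n else \<bottom>) t = eval A \<rho> t"
  using assms
proof (induction t)
  case (Neg t)
  then show ?case using subterms_refl[of t] by (simp add: neg_gen_eq)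
next
  case (Box t)
  then show ?case using subterms_refl[of t] by (simp add: box_gen_eq)
next
  case (Dia t)
  then show ?case using subterms_refl[of t] by (simp add: dia_gen_eq)
qed auto

end

lemma finite_countermodel:
  fixes A :: "'a mlalg"
  assumes A: "is_MLbd A" and \<rho>: "\<forall>n. \<rho> n \<in> carrier A" and ne: "eval A \<rho> s \<noteq> eval A \<rho> t"
  shows "\<exists>B :: 'a mlalg. is_MLbd B \<and> finite (carrier B) \<and> \<not> holds_in B s t"
proof -
  define vals where "vals u = {eval A \<rho> u, neg A (eval A \<rho> u), neg A (box A (eval A \<rho> u))}" for u
  define S where "S = (\<Union>u\<in>subterms s \<union> subterms t. vals u)"
  interpret MLbd_finite_sublattice A S
  proof
    show "distrib_bounded_lattice A" "is_MLbd A" using A unfolding is_MLbd_def by simp_all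
    show "finite S" unfolding S_def vals_def by (simp add: finite_subterms)
    show "S \<subseteq> carrier A" unfolding S_def vals_def
      using eval_closed[OF A \<rho>] MLbd_neg_closed[OF A] MLbd_box_closed[OF A] by auto
  qed
  have "vals u \<subseteq> S" if "u \<in> subterms s \<union> subterms t" for u
    unfolding S_def using that by blast
  then have vals_gen: "\<forall>u\<in>subterms r. eval A \<rho> u \<in> gen \<and> neg A (eval A \<rho> u) \<in> gen \<and>
      neg A (box A (eval A \<rho> u)) \<in> gen" if "r \<in> {s, t}" for r
    using that S_subset_gen unfolding vals_def by blast
  define \<sigma> where "\<sigma> n = (if \<rho> n \<in> gen then \<rho> n else zero A)" for n
  have "eval sub_alg \<sigma> r = eval A \<rho> r" if "r \<in> {s, t}" for r
    unfolding \<sigma>_def using vals_gen[OF that] by (rule eval_sub_alg)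
  moreover have "\<forall>n. \<sigma> n \<in> carrier sub_alg" by (simp add: \<sigma>_def)
  ultimately have "\<not> holds_in sub_alg s t" using ne unfolding holds_in_def by (metis insertCI)
  then show ?thesis using sub_alg_is_MLbd finite_gen by auto
qed

theorem corollary4:
  fixes s t :: trm
  assumes "infinite (UNIV :: 'a set)"
  shows "(\<forall>A :: 'a mlalg. is_MLbd A \<longrightarrow> holds_in A s t) \<longleftrightarrow>
         (\<forall>A :: 'a mlalg. is_MLbd A \<and> finite (carrier A) \<longrightarrow> holds_in A s t)"
proof
  show "\<forall>A :: 'a mlalg. is_MLbd A \<and> finite (carrier A) \<longrightarrow> holds_in A s t"
    if "\<forall>A :: 'a mlalg. is_MLbd A \<longrightarrow> holds_in A s t"
    using that by blast
  show "\<forall>A :: 'a mlalg. is_MLbd A \<longrightarrow> holds_in A s t"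
    if finite_holds: "\<forall>A :: 'a mlalg. is_MLbd A \<and> finite (carrier A) \<longrightarrow> holds_in A s t"
    using finite_countermodel finite_holds unfolding holds_in_def by blast
qed

end
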